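(* For $n\in\mathbb{Z}_+^I$, $j\in\mathcal{J}^\circ$ and $i\in\mathcal{I}$ with $j\in i$, $$E\,M^\circ_{ji}(n)=\frac{1}{\mu_{ji}}\frac{B^{+j}(n-e_i)}{B(n)},$$ where $e_i$ is the $i$-th unit vector.
   Context: Closed multiclass network: finite queue set $\mathcal{J}$, finite route set $\mathcal{I}$, each route a subset of $\mathcal{J}$ with a cyclic visiting order (each queue at most once), rates $\mu_{ji}>0$ for $j\in i$. For $k\in\mathbb{Z}_+^I$, $\mathcal{S}(k)$ is the set of $m=(m_{ji}: j\in i)$ with nonnegative integer entries and $\sum_{j\in i}m_{ji}=k_i$, $m_j=\sum_{i: j\in i}m_{ji}$; the stationary distribution is $\pi(m\mid k)=B(k)^{-1}\prod_{j}\big(\frac{m_j!}{\prod_{i: j\in i}m_{ji}!}\prod_{i: j\in i}\mu_{ji}^{-m_{ji}}\big)$ with normalizing constant $B(k)$. $\Lambda^*(n)$ is the unique optimizer of: maximize $\sum_i n_i\log\Lambda_i$ s.t. $\sum_{i: j\in i}\Lambda_i/\mu_{ji}\le1$ for all $j$, $\Lambda\ge0$, and $\mathcal{J}^\circ=\{j:\sum_{i: j\in i}\Lambda^*_i(n)/\mu_{ji}<1\}$. $M^\circ_{ji}(n)$ is the number of route-$i$ customers at queue $j$ under the stationary distribution $\pi(\cdot\mid n)$. $B^{+j}(k)$ is the normalizing constant (same formula) of the closed network obtained by adding a replica of queue $j$ immediately after $j$ on every route through $j$, with the same rates $\mu_{ji}$ at the replica. *)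

theory Defs
  imports Complex_Main "HOL-Library.Extended_Real"
begin

text \<open>Queues form a finite type 'q, routes a finite type 'r.
  R i is the set of queues on route i (the cyclic visiting order does not enter the
  stationary distribution, so it is not recorded). mu j i is the rate of route-i
  customers at queue j (only used for j in R i).\<close>

text \<open>State space S(k); k is integer-valued so that S(k) is empty (and B(k) = 0)
  when some component of k is negative, e.g. for n - e_i with n_i = 0.\<close>
definition states :: "('r \<Rightarrow> 'q set) \<Rightarrow> ('r \<Rightarrow> int) \<Rightarrow> ('q \<Rightarrow> 'r \<Rightarrow> nat) set" where
  "states R k = {m. (\<forall>i j. j \<notin> R i \<longrightarrow> m j i = 0) \<and>
                    (\<forall>i. int (\<Sum>j\<in>R i. m j i) = k i)}"

definition routes_through :: "('r::finite \<Rightarrow> 'q set) \<Rightarrow> 'q \<Rightarrow> 'r set" where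
  "routes_through R j = {i. j \<in> R i}"

definition queue_total :: "('r::finite \<Rightarrow> 'q set) \<Rightarrow> ('q \<Rightarrow> 'r \<Rightarrow> nat) \<Rightarrow> 'q \<Rightarrow> nat" where
  "queue_total R m j = (\<Sum>i\<in>routes_through R j. m j i)"

definition weight :: "('r::finite \<Rightarrow> 'q::finite set) \<Rightarrow> ('q \<Rightarrow> 'r \<Rightarrow> real) \<Rightarrow> ('q \<Rightarrow> 'r \<Rightarrow> nat) \<Rightarrow> real" where
  "weight R mu m = (\<Prod>j\<in>UNIV.
      (fact (queue_total R m j) / (\<Prod>i\<in>routes_through R j. fact (m j i)))
      * (\<Prod>i\<in>routes_through R j. (1 / mu j i) ^ (m j i)))"

definition Bnorm :: "('r::finite \<Rightarrow> 'q::finite set) \<Rightarrow> ('q \<Rightarrow> 'r \<Rightarrow> real) \<Rightarrow> ('r \<Rightarrow> int) \<Rightarrow> real" where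
  "Bnorm R mu k = (\<Sum>m\<in>states R k. weight R mu m)"

definition stat_pi :: "('r::finite \<Rightarrow> 'q::finite set) \<Rightarrow> ('q \<Rightarrow> 'r \<Rightarrow> real) \<Rightarrow> ('r \<Rightarrow> int) \<Rightarrow> ('q \<Rightarrow> 'r \<Rightarrow> nat) \<Rightarrow> real" where
  "stat_pi R mu k m = (if m \<in> states R k then weight R mu m / Bnorm R mu k else 0)"

definition EM :: "('r::finite \<Rightarrow> 'q::finite set) \<Rightarrow> ('q \<Rightarrow> 'r \<Rightarrow> real) \<Rightarrow> ('r \<Rightarrow> nat) \<Rightarrow> 'q \<Rightarrow> 'r \<Rightarrow> real" where
  "EM R mu n j i = (\<Sum>m\<in>states R (\<lambda>r. int (n r)). real (m j i) * stat_pi R mu (\<lambda>r. int (n r)) m)"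

text \<open>Network with a replica of queue j inserted right after j on every route through j:
  queues Inl q are the original ones, Inr () is the replica, with the same rates as j.\<close>
definition replica_routes :: "('r \<Rightarrow> 'q set) \<Rightarrow> 'q \<Rightarrow> 'r \<Rightarrow> ('q + unit) set" where
  "replica_routes R j i = Inl ` R i \<union> (if j \<in> R i then {Inr ()} else {})"

definition replica_rates :: "('q \<Rightarrow> 'r \<Rightarrow> real) \<Rightarrow> 'q \<Rightarrow> ('q + unit) \<Rightarrow> 'r \<Rightarrow> real" where
  "replica_rates mu j q i = (case q of Inl q' \<Rightarrow> mu q' i | Inr _ \<Rightarrow> mu j i)"

definition Bplus :: "('r::finite \<Rightarrow> 'q::finite set) \<Rightarrow> ('q \<Rightarrow> 'r \<Rightarrow> real) \<Rightarrow> 'q \<Rightarrow> ('r \<Rightarrow> int) \<Rightarrow> real" where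
  "Bplus R mu j k = Bnorm (replica_routes R j) (replica_rates mu j) k"

definition feasible :: "('r::finite \<Rightarrow> 'q set) \<Rightarrow> ('q \<Rightarrow> 'r \<Rightarrow> real) \<Rightarrow> ('r \<Rightarrow> real) \<Rightarrow> bool" where
  "feasible R mu L \<longleftrightarrow> (\<forall>i. L i \<ge> 0) \<and> (\<forall>j. (\<Sum>i\<in>routes_through R j. L i / mu j i) \<le> 1)"

definition objective :: "('r::finite \<Rightarrow> nat) \<Rightarrow> ('r \<Rightarrow> real) \<Rightarrow> ereal" where
  "objective n L = (if \<exists>i. n i > 0 \<and> L i = 0 then -\<infinity>
                    else ereal (\<Sum>i\<in>{i. n i > 0}. real (n i) * ln (L i)))"

definition is_optimizer :: "('r::finite \<Rightarrow> 'q set) \<Rightarrow> ('q \<Rightarrow> 'r \<Rightarrow> real) \<Rightarrow> ('r \<Rightarrow> nat) \<Rightarrow> ('r \<Rightarrow> real) \<Rightarrow> bool" where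
  "is_optimizer R mu n L \<longleftrightarrow> feasible R mu L \<and>
     (\<forall>L'. feasible R mu L' \<longrightarrow> objective n L' \<le> objective n L)"

definition Lambda_star :: "('r::finite \<Rightarrow> 'q set) \<Rightarrow> ('q \<Rightarrow> 'r \<Rightarrow> real) \<Rightarrow> ('r \<Rightarrow> nat) \<Rightarrow> 'r \<Rightarrow> real" where
  "Lambda_star R mu n = (THE L. is_optimizer R mu n L)"

definition Jcirc :: "('r::finite \<Rightarrow> 'q set) \<Rightarrow> ('q \<Rightarrow> 'r \<Rightarrow> real) \<Rightarrow> ('r \<Rightarrow> nat) \<Rightarrow> 'q set" where
  "Jcirc R mu n = {j. (\<Sum>i\<in>routes_through R j. Lambda_star R mu n i / mu j i) < 1}"

end

theory Submission
  imports Defs "HOL-Library.FuncSet"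
begin

text \<open>Adding a route-i customer at queue j is a bijection from S(n - e_i) onto the states of
  S(n) with m_ji > 0, and it multiplies the product-form weight w by
  (m_j + 1) / ((m_ji + 1) mu_ji).  Hence the sum of m_ji w(m) over S(n) equals mu_ji^-1 times the
  sum of (m_j + 1) w(m) over S(n - e_i).  A state of the replica network is a state m of the
  original network together with a split b \<le> m_j of the customers at j between j and its
  replica, and the multinomial Vandermonde identity
  \<Sum>_b multinomial(m_j - b) multinomial(b) = (m_j + 1) multinomial(m_j) shows that B^{+j}(k) is
  the sum of (m_j + 1) w(m) over S(k).\<close>

definition bounded_by :: "'a set \<Rightarrow> ('a \<Rightarrow> nat) \<Rightarrow> ('a \<Rightarrow> nat) set" where
  "bounded_by T c = {b. (\<forall>i\<in>T. b i \<le> c i) \<and> (\<forall>i. i \<notin> T \<longrightarrow> b i = 0)}"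

lemma finite_bounded_by:
  assumes "finite T"
  shows "finite (bounded_by T c)"
proof -
  have "bounded_by T c \<subseteq> {f. \<forall>x. (x \<in> T \<longrightarrow> f x \<in> {..sum c T}) \<and> (x \<notin> T \<longrightarrow> f x = 0)}"
    unfolding bounded_by_def using assms by (auto intro: order_trans[OF _ member_le_sum])
  moreover have "finite {f. \<forall>x. (x \<in> T \<longrightarrow> f x \<in> {..sum c T}) \<and> (x \<notin> T \<longrightarrow> f x = (0::nat))}"
    by (rule finite_set_of_finite_funs) (use assms in auto)
  ultimately show ?thesis
    by (rule finite_subset)
qed

lemma vandermonde_multi:
  assumes "finite T"
  shows "(\<Sum>b | b \<in> bounded_by T c \<and> sum b T = k. \<Prod>i\<in>T. c i choose b i) = sum c T choose k"
  using assms
proof (induction T arbitrary: k rule: finite_induct)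
  case empty
  have "bounded_by {} c = {\<lambda>_. 0}"
    unfolding bounded_by_def by auto
  then show ?case
    by (cases k) auto
next
  case (insert t T)
  let ?B = "\<lambda>k. {b. b \<in> bounded_by T c \<and> sum b T = k}"
  let ?S = "Sigma {a. a \<le> k \<and> a \<le> c t} (\<lambda>a. ?B (k - a))"
  have "(\<Sum>b | b \<in> bounded_by (insert t T) c \<and> sum b (insert t T) = k. \<Prod>i\<in>insert t T. c i choose b i)
      = (\<Sum>(a, b)\<in>?S. (c t choose a) * (\<Prod>i\<in>T. c i choose b i))"
  proof (rule sum.reindex_bij_witness[where j = "\<lambda>b. (b t, b(t := 0))" and i = "\<lambda>(a, b). b(t := a)"])
    fix b
    assume b: "b \<in> {b. b \<in> bounded_by (insert t T) c \<and> sum b (insert t T) = k}"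
    have "sum (b(t := 0)) T = sum b T" "(\<Prod>i\<in>T. c i choose (b(t := 0)) i) = (\<Prod>i\<in>T. c i choose b i)"
      using insert.hyps by (auto intro!: sum.cong prod.cong)
    with b insert.hyps show "(b t, b(t := 0)) \<in> ?S"
      and "(case (b t, b(t := 0)) of (a, b) \<Rightarrow> (c t choose a) * (\<Prod>i\<in>T. c i choose b i))
             = (\<Prod>i\<in>insert t T. c i choose b i)"
      unfolding bounded_by_def by auto
  next
    fix p
    assume p: "p \<in> ?S"
    then obtain a b where ab: "p = (a, b)" and "b t = 0"
      using insert.hyps unfolding bounded_by_def by auto
    moreover have "sum (b(t := a)) T = sum b T"
      using insert.hyps by (auto intro!: sum.cong)
    ultimately show "(\<lambda>b. (b t, b(t := 0))) ((\<lambda>(a, b). b(t := a)) p) = p"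
      and "(\<lambda>(a, b). b(t := a)) p \<in> {b. b \<in> bounded_by (insert t T) c \<and> sum b (insert t T) = k}"
      using p insert.hyps unfolding bounded_by_def by (auto simp: fun_eq_iff)
  qed auto
  also have "\<dots> = (\<Sum>a | a \<le> k \<and> a \<le> c t. \<Sum>b\<in>?B (k - a). (c t choose a) * (\<Prod>i\<in>T. c i choose b i))"
    by (subst sum.Sigma) (use finite_bounded_by[OF insert.hyps(1)] in auto)
  also have "\<dots> = (\<Sum>a | a \<le> k \<and> a \<le> c t. (c t choose a) * (sum c T choose (k - a)))"
    by (simp add: sum_distrib_left[symmetric] insert.IH)
  also have "\<dots> = (\<Sum>a\<le>k. (c t choose a) * (sum c T choose (k - a)))"
    by (rule sum.mono_neutral_left) auto
  also have "\<dots> = sum c (insert t T) choose k"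
    using insert.hyps by (simp add: vandermonde)
  finally show ?case .
qed

definition multinomial :: "'a set \<Rightarrow> ('a \<Rightarrow> nat) \<Rightarrow> real" where
  "multinomial T x = fact (sum x T) / (\<Prod>i\<in>T. fact (x i))"

lemma multinomial_mult_multinomial:
  assumes "finite T" and b: "b \<in> bounded_by T c"
  shows "multinomial T (\<lambda>i. c i - b i) * multinomial T b
       = multinomial T c * (\<Prod>i\<in>T. c i choose b i) / (sum c T choose sum b T)"
proof -
  have le: "\<And>i. i \<in> T \<Longrightarrow> b i \<le> c i"
    using b unfolding bounded_by_def by auto
  then have "sum b T \<le> sum c T"
    by (rule sum_mono)
  then have "real (sum c T choose sum b T) = fact (sum c T) / (fact (sum b T) * fact (sum c T - sum b T))"
    by (rule binomial_fact)
  moreover have "real (\<Prod>i\<in>T. c i choose b i)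
      = (\<Prod>i\<in>T. fact (c i)) / ((\<Prod>i\<in>T. fact (b i)) * (\<Prod>i\<in>T. fact (c i - b i)))"
    by (simp add: of_nat_prod binomial_fact[OF le] prod_dividef prod.distrib cong: prod.cong)
  moreover have "(\<Sum>i\<in>T. c i - b i) = sum c T - sum b T"
    by (rule sum_subtractf_nat) (use le in auto)
  moreover have "(\<Prod>i\<in>T. fact (c i)) \<noteq> (0::real)" "(\<Prod>i\<in>T. fact (b i)) \<noteq> (0::real)"
    "(\<Prod>i\<in>T. fact (c i - b i)) \<noteq> (0::real)" "real (sum c T choose sum b T) \<noteq> 0"
    using \<open>sum b T \<le> sum c T\<close> by (auto simp: prod_zero_iff[OF \<open>finite T\<close>])
  ultimately show ?thesis
    unfolding multinomial_def by (simp add: field_simps)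
qed

lemma sum_multinomial_convolution:
  assumes "finite T"
  shows "(\<Sum>b\<in>bounded_by T c. multinomial T (\<lambda>i. c i - b i) * multinomial T b)
       = (real (sum c T) + 1) * multinomial T c"
proof -
  let ?N = "sum c T"
  have "(\<Sum>b\<in>bounded_by T c. multinomial T (\<lambda>i. c i - b i) * multinomial T b)
      = (\<Sum>b\<in>bounded_by T c. multinomial T c * (\<Prod>i\<in>T. c i choose b i) / (?N choose sum b T))"
    by (rule sum.cong) (simp_all add: multinomial_mult_multinomial[OF assms])
  also have "\<dots> = (\<Sum>k\<le>?N. \<Sum>b | b \<in> bounded_by T c \<and> sum b T = k.
           multinomial T c * (\<Prod>i\<in>T. c i choose b i) / (?N choose sum b T))"
    by (rule sum.group[symmetric])
      (use finite_bounded_by[OF assms] in \<open>auto simp: bounded_by_def intro!: sum_mono\<close>)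
  also have "\<dots> = (\<Sum>k\<le>?N. multinomial T c / (?N choose k)
                     * (\<Sum>b | b \<in> bounded_by T c \<and> sum b T = k. \<Prod>i\<in>T. c i choose b i))"
    by (rule sum.cong) (auto simp: sum_distrib_left of_nat_sum intro!: sum.cong)
  also have "\<dots> = (\<Sum>k\<le>?N. multinomial T c)"
    by (rule sum.cong) (auto simp: vandermonde_multi[OF assms])
  finally show ?thesis
    by simp
qed

definition queue_weight :: "'a set \<Rightarrow> ('a \<Rightarrow> real) \<Rightarrow> ('a \<Rightarrow> nat) \<Rightarrow> real" where
  "queue_weight T r x = multinomial T x * (\<Prod>i\<in>T. (1 / r i) ^ x i)"

lemma sum_queue_weight_split:
  assumes "finite T"
  shows "(\<Sum>b\<in>bounded_by T c. queue_weight T r (\<lambda>i. c i - b i) * queue_weight T r b)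
       = (real (sum c T) + 1) * queue_weight T r c"
proof -
  have term_eq: "queue_weight T r (\<lambda>i. c i - b i) * queue_weight T r b
      = multinomial T (\<lambda>i. c i - b i) * multinomial T b * (\<Prod>i\<in>T. (1 / r i) ^ c i)"
    if "b \<in> bounded_by T c" for b
  proof -
    have "(\<Prod>i\<in>T. (1 / r i) ^ (c i - b i)) * (\<Prod>i\<in>T. (1 / r i) ^ b i) = (\<Prod>i\<in>T. (1 / r i) ^ c i)"
      unfolding prod.distrib[symmetric] power_add[symmetric]
      by (rule prod.cong) (use that in \<open>auto simp: bounded_by_def\<close>)
    then show ?thesis
      unfolding queue_weight_def by (simp add: algebra_simps)
  qed
  have "(\<Sum>b\<in>bounded_by T c. queue_weight T r (\<lambda>i. c i - b i) * queue_weight T r b)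
      = (\<Sum>b\<in>bounded_by T c. multinomial T (\<lambda>i. c i - b i) * multinomial T b) * (\<Prod>i\<in>T. (1 / r i) ^ c i)"
    unfolding sum_distrib_right using term_eq by (auto intro!: sum.cong)
  then show ?thesis
    by (simp add: sum_multinomial_convolution[OF assms] queue_weight_def)
qed

lemma queue_weight_add_unit:
  assumes "finite T" "i \<in> T" "r i \<noteq> 0"
  shows "real (x i + 1) * queue_weight T r (\<lambda>a. x a + (if a = i then 1 else 0))
       = (real (sum x T) + 1) / r i * queue_weight T r x"
proof -
  let ?x' = "\<lambda>a. x a + (if a = i then 1 else 0)"
  have "(\<Prod>a\<in>T - {i}. fact (?x' a) :: real) = (\<Prod>a\<in>T - {i}. fact (x a))"
    "(\<Prod>a\<in>T - {i}. (1 / r a) ^ ?x' a) = (\<Prod>a\<in>T - {i}. (1 / r a) ^ x a)"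
    by (auto intro!: prod.cong)
  then have fact_prod: "(\<Prod>a\<in>T. fact (?x' a) :: real) = (\<Prod>a\<in>T. fact (x a)) * (real (x i) + 1)"
    and power_prod: "(\<Prod>a\<in>T. (1 / r a) ^ ?x' a) = (\<Prod>a\<in>T. (1 / r a) ^ x a) * (1 / r i)"
    by (simp_all add: prod.remove[OF assms(1,2)] algebra_simps)
  have "sum ?x' T = sum x T + 1"
    using assms by (simp add: sum.distrib)
  then have "(fact (sum ?x' T) :: real) = (real (sum x T) + 1) * fact (sum x T)"
    by simp
  moreover have "(\<Prod>a\<in>T. fact (x a) :: real) \<noteq> 0" "real (x i) + 1 \<noteq> 0"
    using assms(1) by simp_all
  ultimately show ?thesis
    using assms(3) unfolding queue_weight_def multinomial_def fact_prod power_prod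
    by (simp add: divide_simps del: of_nat_sum)
qed

lemma weight_eq_prod_queue_weight:
  "weight R mu m = (\<Prod>q\<in>UNIV. queue_weight (routes_through R q) (mu q) (m q))"
  unfolding weight_def queue_weight_def multinomial_def queue_total_def by simp

lemma finite_states: "finite (states (R :: 'r::finite \<Rightarrow> 'q::finite set) k)"
proof (rule finite_subset)
  show "states R k \<subseteq> PiE UNIV (\<lambda>_. bounded_by UNIV (\<lambda>i. nat (k i)))"
  proof (clarsimp simp: PiE_UNIV_domain bounded_by_def)
    fix m q i
    assume m: "m \<in> states R k"
    show "m q i \<le> nat (k i)"
    proof (cases "q \<in> R i")
      case True
      then have "m q i \<le> (\<Sum>j\<in>R i. m j i)"
        by (intro member_le_sum) auto
      moreover have "int (\<Sum>j\<in>R i. m j i) = k i"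
        using m unfolding states_def by blast
      ultimately show ?thesis
        by linarith
    next
      case False
      then show ?thesis
        using m unfolding states_def by auto
    qed
  qed
  show "finite (PiE UNIV (\<lambda>_. bounded_by UNIV (\<lambda>i. nat (k i))) :: ('q \<Rightarrow> 'r \<Rightarrow> nat) set)"
    by (intro finite_PiE finite_bounded_by) auto
qed

definition add_customer :: "'q \<Rightarrow> 'r \<Rightarrow> ('q \<Rightarrow> 'r \<Rightarrow> nat) \<Rightarrow> 'q \<Rightarrow> 'r \<Rightarrow> nat" where
  "add_customer j i m = (\<lambda>q r. m q r + (if q = j \<and> r = i then 1 else 0))"

lemma add_customer_mem_states_iff:
  fixes R :: "'r \<Rightarrow> 'q::finite set"
  assumes "j \<in> R i"
  shows "add_customer j i m \<in> states R k \<longleftrightarrow> m \<in> states R (\<lambda>r. k r - (if r = i then 1 else 0))"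
proof -
  have "(\<Sum>q\<in>R r. add_customer j i m q r) = (\<Sum>q\<in>R r. m q r) + (if r = i then 1 else 0)" for r
    using assms by (simp add: add_customer_def sum.distrib sum.delta)
  moreover have "add_customer j i m q r = m q r" if "q \<notin> R r" for q r
    using assms that by (auto simp: add_customer_def)
  ultimately show ?thesis
    unfolding states_def by (auto simp del: of_nat_sum)
qed

lemma weight_add_customer:
  fixes R :: "'r::finite \<Rightarrow> 'q::finite set"
  assumes "j \<in> R i" "mu j i \<noteq> 0"
  shows "real (add_customer j i m j i) * weight R mu (add_customer j i m)
       = (real (queue_total R m j) + 1) / mu j i * weight R mu m"
proof -
  let ?w = "\<lambda>m q. queue_weight (routes_through R q) (mu q) (m q)"
  have "i \<in> routes_through R j"
    using assms(1) by (simp add: routes_through_def)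
  then have "real (add_customer j i m j i) * ?w (add_customer j i m) j
      = (real (queue_total R m j) + 1) / mu j i * ?w m j"
    using queue_weight_add_unit[of "routes_through R j" i "mu j" "m j"] assms(2)
    by (simp add: add_customer_def queue_total_def)
  moreover have "(\<Prod>q\<in>UNIV - {j}. ?w (add_customer j i m) q) = (\<Prod>q\<in>UNIV - {j}. ?w m q)"
    by (rule prod.cong) (auto simp: add_customer_def)
  ultimately show ?thesis
    unfolding weight_eq_prod_queue_weight by (simp add: prod.remove[of UNIV j] mult.assoc[symmetric])
qed

lemma sum_customers_weight:
  fixes R :: "'r::finite \<Rightarrow> 'q::finite set"
  assumes ji: "j \<in> R i" and mu: "mu j i \<noteq> 0"
  shows "(\<Sum>m\<in>states R k. real (m j i) * weight R mu m)
       = 1 / mu j i * (\<Sum>m\<in>states R (\<lambda>r. k r - (if r = i then 1 else 0)).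
                         (real (queue_total R m j) + 1) * weight R mu m)"
proof -
  let ?k' = "\<lambda>r. k r - (if r = i then 1 else 0)"
  let ?remove = "\<lambda>m q r. m q r - (if q = j \<and> r = i then 1 else 0)"
  have "(\<Sum>m\<in>states R k. real (m j i) * weight R mu m)
      = (\<Sum>m\<in>states R k \<inter> {m. 0 < m j i}. real (m j i) * weight R mu m)"
    by (rule sum.mono_neutral_right) (auto simp: finite_states)
  also have "\<dots> = (\<Sum>m\<in>states R ?k'. real (add_customer j i m j i) * weight R mu (add_customer j i m))"
  proof (rule sum.reindex_bij_witness[where i = "add_customer j i" and j = ?remove])
    fix m
    assume m: "m \<in> states R k \<inter> {m. 0 < m j i}"
    then have inverse: "add_customer j i (?remove m) = m"
      by (auto simp: add_customer_def fun_eq_iff)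
    with m show "add_customer j i (?remove m) = m" and "?remove m \<in> states R ?k'"
      using add_customer_mem_states_iff[where R = R, OF ji, of "?remove m"] by auto
    show "real (add_customer j i (?remove m) j i) * weight R mu (add_customer j i (?remove m))
        = real (m j i) * weight R mu m"
      by (simp only: inverse)
  next
    fix m
    assume "m \<in> states R ?k'"
    then show "?remove (add_customer j i m) = m" and "add_customer j i m \<in> states R k \<inter> {m. 0 < m j i}"
      by (auto simp: add_customer_def add_customer_mem_states_iff[where R = R, OF ji, symmetric])
  qed
  also have "\<dots> = 1 / mu j i * (\<Sum>m\<in>states R ?k'. (real (queue_total R m j) + 1) * weight R mu m)"
    by (simp add: weight_add_customer[where R = R and mu = mu, OF ji mu] sum_distrib_left)
  finally show ?thesis .
qed

lemma Inl_mem_replica_routes_iff [simp]: "Inl q \<in> replica_routes R j i \<longleftrightarrow> q \<in> R i"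
  unfolding replica_routes_def by auto

lemma Inr_mem_replica_routes_iff [simp]: "Inr u \<in> replica_routes R j i \<longleftrightarrow> j \<in> R i"
  unfolding replica_routes_def by auto

lemma routes_through_replica_Inl [simp]:
  "routes_through (replica_routes R j) (Inl q) = routes_through R q"
  unfolding routes_through_def replica_routes_def by auto

lemma routes_through_replica_Inr [simp]:
  "routes_through (replica_routes R j) (Inr u) = routes_through R j"
  unfolding routes_through_def replica_routes_def by auto

lemma replica_rates_Inl [simp]: "replica_rates mu j (Inl q) = mu q"
  by (simp add: replica_rates_def fun_eq_iff)

lemma replica_rates_Inr [simp]: "replica_rates mu j (Inr u) = mu j"
  by (simp add: replica_rates_def fun_eq_iff)

lemma weight_replica:
  fixes R :: "'r::finite \<Rightarrow> 'q::finite set"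
  shows "weight (replica_routes R j) (replica_rates mu j) m'
       = (\<Prod>q\<in>UNIV. queue_weight (routes_through R q) (mu q) (m' (Inl q)))
         * queue_weight (routes_through R j) (mu j) (m' (Inr ()))"
  unfolding weight_eq_prod_queue_weight UNIV_Plus_UNIV[symmetric] prod.Plus[OF finite finite]
  by (simp add: UNIV_unit)

definition merged_state :: "'q \<Rightarrow> ('q + unit \<Rightarrow> 'r \<Rightarrow> nat) \<Rightarrow> 'q \<Rightarrow> 'r \<Rightarrow> nat" where
  "merged_state j m' = (\<lambda>q i. m' (Inl q) i + (if q = j then m' (Inr ()) i else 0))"

definition replica_state :: "'q \<Rightarrow> ('q \<Rightarrow> 'r \<Rightarrow> nat) \<Rightarrow> ('r \<Rightarrow> nat) \<Rightarrow> 'q + unit \<Rightarrow> 'r \<Rightarrow> nat" where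
  "replica_state j m b = (\<lambda>x i. case x of Inl q \<Rightarrow> if q = j then m j i - b i else m q i | Inr _ \<Rightarrow> b i)"

lemma sum_merged_state:
  fixes R :: "'r \<Rightarrow> 'q::finite set"
  shows "(\<Sum>q\<in>R i. merged_state j m' q i) = (\<Sum>x\<in>replica_routes R j i. m' x i)"
proof -
  have "(\<Sum>x\<in>replica_routes R j i. m' x i)
      = (\<Sum>x\<in>Inl ` R i. m' x i) + (\<Sum>x\<in>(if j \<in> R i then {Inr ()} else {}). m' x i)"
    unfolding replica_routes_def by (rule sum.union_disjoint) auto
  then show ?thesis
    by (simp add: merged_state_def sum.distrib sum.delta sum.reindex)
qed

lemma mem_states_replica_iff:
  fixes R :: "'r \<Rightarrow> 'q::finite set"
  shows "m' \<in> states (replica_routes R j) k \<longleftrightarrow>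
    (\<forall>i q. q \<notin> R i \<longrightarrow> m' (Inl q) i = 0) \<and> (\<forall>i. j \<notin> R i \<longrightarrow> m' (Inr ()) i = 0) \<and>
    (\<forall>i. int (\<Sum>q\<in>R i. merged_state j m' q i) = k i)"
  unfolding states_def sum_merged_state by (auto simp: split_sum_all)

lemma merged_state_mem_states:
  fixes R :: "'r::finite \<Rightarrow> 'q::finite set"
  assumes "m' \<in> states (replica_routes R j) k"
  shows "merged_state j m' \<in> states R k"
    and "m' (Inr ()) \<in> bounded_by (routes_through R j) (merged_state j m' j)"
  using assms unfolding mem_states_replica_iff
  by (auto simp: states_def bounded_by_def routes_through_def merged_state_def simp del: of_nat_sum)

lemma replica_state_merged_state: "replica_state j (merged_state j m') (m' (Inr ())) = m'"
  by (simp add: replica_state_def merged_state_def fun_eq_iff split_sum_all)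

lemma merged_state_replica_state:
  assumes "b \<in> bounded_by (routes_through R j) (m j)"
  shows "merged_state j (replica_state j m b) = m"
proof -
  have "b i \<le> m j i" for i
    using assms by (cases "j \<in> R i") (auto simp: bounded_by_def routes_through_def)
  then show ?thesis
    by (simp add: merged_state_def replica_state_def fun_eq_iff)
qed

lemma replica_state_mem_states:
  fixes R :: "'r::finite \<Rightarrow> 'q::finite set"
  assumes "m \<in> states R k" and "b \<in> bounded_by (routes_through R j) (m j)"
  shows "replica_state j m b \<in> states (replica_routes R j) k"
  using assms merged_state_replica_state[where R = R and j = j and m = m, OF assms(2)] unfolding mem_states_replica_iff
  by (auto simp: states_def bounded_by_def routes_through_def replica_state_def simp del: of_nat_sum)

lemma weight_replica_state:
  fixes R :: "'r::finite \<Rightarrow> 'q::finite set"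
  shows "weight (replica_routes R j) (replica_rates mu j) (replica_state j m b)
       = (\<Prod>q\<in>UNIV - {j}. queue_weight (routes_through R q) (mu q) (m q))
         * queue_weight (routes_through R j) (mu j) (\<lambda>i. m j i - b i)
         * queue_weight (routes_through R j) (mu j) b"
proof -
  have "(\<Prod>q\<in>UNIV - {j}. queue_weight (routes_through R q) (mu q) (replica_state j m b (Inl q)))
      = (\<Prod>q\<in>UNIV - {j}. queue_weight (routes_through R q) (mu q) (m q))"
    by (rule prod.cong) (auto simp: replica_state_def fun_eq_iff)
  then show ?thesis
    unfolding weight_replica by (simp add: prod.remove[of UNIV j] replica_state_def mult_ac)
qed

lemma Bplus_eq_sum_queue_total:
  fixes R :: "'r::finite \<Rightarrow> 'q::finite set"
  shows "Bplus R mu j k = (\<Sum>m\<in>states R k. (real (queue_total R m j) + 1) * weight R mu m)"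
proof -
  let ?T = "routes_through R j"
  let ?w = "\<lambda>m q. queue_weight (routes_through R q) (mu q) (m q)"
  let ?W' = "weight (replica_routes R j) (replica_rates mu j)"
  have "Bplus R mu j k = (\<Sum>(m, b)\<in>Sigma (states R k) (\<lambda>m. bounded_by ?T (m j)). ?W' (replica_state j m b))"
    unfolding Bplus_def Bnorm_def
  proof (rule sum.reindex_bij_witness[where i = "\<lambda>(m, b). replica_state j m b"
                                        and j = "\<lambda>m'. (merged_state j m', m' (Inr ()))"])
    fix m'
    assume "m' \<in> states (replica_routes R j) k"
    then show "(merged_state j m', m' (Inr ())) \<in> Sigma (states R k) (\<lambda>m. bounded_by ?T (m j))"
      by (auto dest: merged_state_mem_states)
  next
    fix p
    assume "p \<in> Sigma (states R k) (\<lambda>m. bounded_by ?T (m j))"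
    then show "(\<lambda>m'. (merged_state j m', m' (Inr ()))) ((\<lambda>(m, b). replica_state j m b) p) = p"
      and "(\<lambda>(m, b). replica_state j m b) p \<in> states (replica_routes R j) k"
      by (auto simp: merged_state_replica_state replica_state_mem_states)
        (simp add: replica_state_def)
  qed (simp_all add: replica_state_merged_state)
  also have "\<dots> = (\<Sum>m\<in>states R k. \<Sum>b\<in>bounded_by ?T (m j). ?W' (replica_state j m b))"
    by (rule sum.Sigma[symmetric]) (auto simp: finite_states finite_bounded_by routes_through_def)
  also have "\<dots> = (\<Sum>m\<in>states R k. (real (queue_total R m j) + 1) * weight R mu m)"
  proof (rule sum.cong[OF refl])
    fix m :: "'q \<Rightarrow> 'r \<Rightarrow> nat"
    have "(\<Sum>b\<in>bounded_by ?T (m j). ?W' (replica_state j m b))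
        = (\<Prod>q\<in>UNIV - {j}. ?w m q)
          * (\<Sum>b\<in>bounded_by ?T (m j). queue_weight ?T (mu j) (\<lambda>i. m j i - b i) * queue_weight ?T (mu j) b)"
      by (simp add: weight_replica_state sum_distrib_left mult.assoc)
    also have "\<dots> = (\<Prod>q\<in>UNIV - {j}. ?w m q) * ((real (queue_total R m j) + 1) * ?w m j)"
      by (simp add: sum_queue_weight_split queue_total_def)
    also have "\<dots> = (real (queue_total R m j) + 1) * weight R mu m"
      by (simp add: weight_eq_prod_queue_weight prod.remove[of UNIV j] mult_ac)
    finally show "(\<Sum>b\<in>bounded_by ?T (m j). ?W' (replica_state j m b))
        = (real (queue_total R m j) + 1) * weight R mu m" .
  qed
  finally show ?thesis .
qed

theorem lemma6:
  fixes R :: "'r::finite \<Rightarrow> 'q::finite set" and mu :: "'q \<Rightarrow> 'r \<Rightarrow> real"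
    and n :: "'r \<Rightarrow> nat" and j :: 'q and i :: 'r
  assumes mu_pos: "\<forall>i'. \<forall>j'\<in>R i'. mu j' i' > 0"
    and jJ: "j \<in> Jcirc R mu n"
    and ji: "j \<in> R i"
  shows "EM R mu n j i
       = (1 / mu j i) * (Bplus R mu j (\<lambda>r. int (n r) - (if r = i then 1 else 0))
                          / Bnorm R mu (\<lambda>r. int (n r)))"
proof -
  have mu: "mu j i \<noteq> 0"
    using mu_pos ji by force
  have "EM R mu n j i
      = (\<Sum>m\<in>states R (\<lambda>r. int (n r)). real (m j i) * weight R mu m) / Bnorm R mu (\<lambda>r. int (n r))"
    unfolding EM_def stat_pi_def sum_divide_distrib by (rule sum.cong) auto
  then show ?thesis
    by (simp add: sum_customers_weight[where R = R and mu = mu, OF ji mu] Bplus_eq_sum_queue_total)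
qed

end
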